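(* Consider the deterministic split-node max-neighbour algorithm described in the context, on a dynamic graph $(G_r)_{r\ge1}$ with node set $V$. For every round $r\ge1$, \[ \phi(V,w_r)\le\phi(V,w_{r-1})-D_r/2 . \]
   Context: Setting: a fixed set $V$ of $n$ nodes, a sequence of connected graphs $G_r=(V,E_r)$ ($r\ge1$), $N_r(v)$ the neighbours of $v$ in $G_r$, non-negative real loads $w_0(v)$, and $w_r(v)$ the load of $v$ at the end of round $r$. For a finite set $U$ and $w:U\to\mathbb{R}_{\ge0}$ define $\phi(U,w)=\sum_{\{u,v\}\subseteq U}|w(u)-w(v)|$ (sum over unordered pairs of distinct elements). Algorithm: each node $v$ is split into two virtual nodes $v_s$ (sender) and $v_a$ (receiver). In round $r$: set $w_r^1(v_s)=w_r^1(v_a)=w_{r-1}(v)/2$. Each $v_s$ sends a proposal to $u_a$ where $u\in N_r(v)$ maximizes $|w_{r-1}(u)-w_{r-1}(v)|$ (ties broken by a fixed deterministic rule). Each $v_a$ that received proposals accepts exactly one, from $u_s$ with $u$ maximizing $|w_{r-1}(u)-w_{r-1}(v)|$ among proposers (deterministic tie-breaking). For each accepted pair $(u_s,v_a)$, set $w_r^2(u_s)=w_r^2(v_a)=(w_r^1(u_s)+w_r^1(v_a))/2$; other virtual nodes keep their value. Then $w_r(v)=w_r^2(v_s)+w_r^2(v_a)$. An ordered pair $(u,v)$ connects at round $r$ if $u_s$'s proposal to $v_a$ was accepted in round $r$; $A_r$ is the set of ordered pairs that connect at round $r$, and \[ D_r=\frac12\sum_{(u,v)\in A_r}|w_{r-1}(u)-w_{r-1}(v)|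 . \] *)

theory Defs
  imports Complex_Main
begin

definition pair_diff :: "('a \<Rightarrow> real) \<Rightarrow> 'a set \<Rightarrow> real" where
  "pair_diff w P = (THE d. \<exists>u v. P = {u, v} \<and> d = \<bar>w u - w v\<bar>)"

definition phi :: "'a set \<Rightarrow> ('a \<Rightarrow> real) \<Rightarrow> real" where
  "phi U w = (\<Sum>P \<in> {P. P \<subseteq> U \<and> card P = 2}. pair_diff w P)"

definition connected_graph :: "'a set \<Rightarrow> ('a \<Rightarrow> 'a set) \<Rightarrow> bool" where
  "connected_graph V N \<longleftrightarrow>
     (\<forall>v\<in>V. N v \<subseteq> V \<and> v \<notin> N v) \<and>
     (\<forall>u\<in>V. \<forall>v\<in>V. u \<in> N v \<longleftrightarrow> v \<in> N u) \<and>
     (\<forall>u\<in>V. \<forall>v\<in>V. (u, v) \<in> {(a, b). a \<in> V \<and> b \<in> N a}\<^sup>*)"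

(* One round. p v = Some u: v_s proposes to u_a; a v = Some u: v_a accepts the proposal of u_s. *)
definition round_step ::
  "('a \<Rightarrow> 'a option) \<Rightarrow> ('a \<Rightarrow> 'a option) \<Rightarrow> ('a \<Rightarrow> real) \<Rightarrow> ('a \<Rightarrow> real)" where
  "round_step p a w = (\<lambda>v.
     let w1s = w v / 2; w1a = w v / 2;
         w2s = (case p v of
                  Some u \<Rightarrow> (if a u = Some v then (w1s + w u / 2) / 2 else w1s)
                | None \<Rightarrow> w1s);
         w2a = (case a v of
                  Some u \<Rightarrow> (w u / 2 + w1a) / 2
                | None \<Rightarrow> w1a)
     in w2s + w2a)"

primrec load ::
  "(nat \<Rightarrow> 'a \<Rightarrow> 'a option) \<Rightarrow> (nat \<Rightarrow> 'a \<Rightarrow> 'a option) \<Rightarrow> ('a \<Rightarrow> real) \<Rightarrow> nat \<Rightarrow> 'a \<Rightarrow> real" where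
  "load p a w0 0 = w0"
| "load p a w0 (Suc r) = round_step (p (Suc r)) (a (Suc r)) (load p a w0 r)"

definition valid_proposals ::
  "'a set \<Rightarrow> ('a \<Rightarrow> 'a set) \<Rightarrow> ('a \<Rightarrow> real) \<Rightarrow> ('a \<Rightarrow> 'a option) \<Rightarrow> bool" where
  "valid_proposals V N w p \<longleftrightarrow>
     (\<forall>v\<in>V. (p v = None \<longleftrightarrow> N v = {}) \<and>
        (\<forall>u. p v = Some u \<longrightarrow> u \<in> N v \<and>
              (\<forall>x\<in>N v. \<bar>w x - w v\<bar> \<le> \<bar>w u - w v\<bar>)))"

definition valid_acceptances ::
  "'a set \<Rightarrow> ('a \<Rightarrow> real) \<Rightarrow> ('a \<Rightarrow> 'a option) \<Rightarrow> ('a \<Rightarrow> 'a option) \<Rightarrow> bool" where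
  "valid_acceptances V w p a \<longleftrightarrow>
     (\<forall>v\<in>V. (a v = None \<longleftrightarrow> (\<forall>u\<in>V. p u \<noteq> Some v)) \<and>
        (\<forall>u. a v = Some u \<longrightarrow> u \<in> V \<and> p u = Some v \<and>
              (\<forall>x\<in>V. p x = Some v \<longrightarrow> \<bar>w x - w v\<bar> \<le> \<bar>w u - w v\<bar>)))"

definition connects :: "'a set \<Rightarrow> ('a \<Rightarrow> 'a option) \<Rightarrow> ('a \<times> 'a) set" where
  "connects V a = {(u, v). u \<in> V \<and> v \<in> V \<and> a v = Some u}"

definition Dval :: "'a set \<Rightarrow> ('a \<Rightarrow> real) \<Rightarrow> ('a \<Rightarrow> 'a option) \<Rightarrow> real" where
  "Dval V w a = (1/2) * (\<Sum>(u, v) \<in> connects V a. \<bar>w u - w v\<bar>)"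

end

theory Submission
  imports Defs
begin

text \<open>
  Write \<open>spread X f\<close> for the sum of \<open>\<bar>f i - f j\<bar>\<close> over all ordered pairs, so that
  \<open>phi V w = spread V w / 2\<close>. Splitting every node into a sender and a receiver carrying half
  its load doubles the spread. The accepted proposals pair up virtual nodes, i.e. they form an
  involution, and the round replaces every virtual load by its average with the partner's.
  Averaging along an involution lowers the spread by at least the sum of the gaps
  \<open>\<bar>f i - f (s i)\<bar>\<close>, which is \<open>2 D\<^sub>r\<close> here, and merging the two halves of each node
  again at least halves it by the triangle inequality.
\<close>

definition spread :: "'b set \<Rightarrow> ('b \<Rightarrow> real) \<Rightarrow> real" where
  "spread X f = (\<Sum>i\<in>X. \<Sum>j\<in>X. \<bar>f i - f j\<bar>)"

lemma pair_diff_doubleton: "pair_diff w {u, v} = \<bar>w u - w v\<bar>"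
  unfolding pair_diff_def
  by (rule the_equality) (auto simp: doubleton_eq_iff abs_minus_commute)

lemma phi_eq_spread:
  assumes "finite V"
  shows "phi V w = spread V w / 2"
proof -
  let ?S = "{x \<in> V \<times> V. fst x \<noteq> snd x}"
  let ?g = "\<lambda>x. \<bar>w (fst x) - w (snd x)\<bar>"
  let ?h = "\<lambda>x. {fst x, snd x}"
  have "spread V w = (\<Sum>x\<in>V \<times> V. ?g x)"
    unfolding spread_def by (simp add: sum.cartesian_product')
  also have "\<dots> = (\<Sum>x\<in>?S. ?g x)"
    by (rule sum.mono_neutral_right) (auto simp: assms)
  also have "\<dots> = (\<Sum>P\<in>?h ` ?S. sum ?g {x\<in>?S. ?h x = P})"
    by (rule sum.image_gen) (simp add: assms)
  also have "?h ` ?S = {P. P \<subseteq> V \<and> card P = 2}"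
  proof
    show "{P. P \<subseteq> V \<and> card P = 2} \<subseteq> ?h ` ?S"
    proof
      fix P assume "P \<in> {P. P \<subseteq> V \<and> card P = 2}"
      then obtain u v where "P = {u, v}" "u \<noteq> v" "P \<subseteq> V" by (auto simp: card_2_iff)
      then show "P \<in> ?h ` ?S" by (auto intro!: image_eqI[where x = "(u, v)"])
    qed
  qed auto
  also have "(\<Sum>P\<in>{P. P \<subseteq> V \<and> card P = 2}. sum ?g {x\<in>?S. ?h x = P})
      = (\<Sum>P\<in>{P. P \<subseteq> V \<and> card P = 2}. 2 * pair_diff w P)"
  proof (rule sum.cong[OF refl])
    fix P assume "P \<in> {P. P \<subseteq> V \<and> card P = 2}"
    then obtain u v where P: "P = {u, v}" "u \<noteq> v" "P \<subseteq> V" by (auto simp: card_2_iff)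
    then have "{x\<in>?S. ?h x = P} = {(u, v), (v, u)}" by (auto simp: doubleton_eq_iff)
    then show "sum ?g {x\<in>?S. ?h x = P} = 2 * pair_diff w P"
      using P by (simp add: pair_diff_doubleton abs_minus_commute)
  qed
  finally show ?thesis unfolding phi_def by (simp add: sum_distrib_left[symmetric])
qed

lemma abs_sum_diff_le:
  fixes a b c d :: real
  shows "\<bar>(a + b) - (c + d)\<bar> \<le> (\<bar>a - c\<bar> + \<bar>a - d\<bar> + \<bar>b - c\<bar> + \<bar>b - d\<bar>) / 2"
  using abs_triangle_ineq[of "a - c" "b - d"] abs_triangle_ineq[of "a - d" "b - c"]
  by (simp add: algebra_simps)

lemma sum_product_bool:
  "(\<Sum>i\<in>V \<times> UNIV. g i) = (\<Sum>v\<in>V. g (v, True) + g (v, False))"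
  by (simp add: sum.cartesian_product' UNIV_bool add.commute)

lemma spread_merge_halves:
  "spread V (\<lambda>v. f (v, True) + f (v, False)) \<le> spread (V \<times> UNIV) f / 2"
proof -
  have "spread V (\<lambda>v. f (v, True) + f (v, False))
      \<le> (\<Sum>u\<in>V. \<Sum>v\<in>V. (\<bar>f (u, True) - f (v, True)\<bar> + \<bar>f (u, True) - f (v, False)\<bar>
            + \<bar>f (u, False) - f (v, True)\<bar> + \<bar>f (u, False) - f (v, False)\<bar>) / 2)"
    unfolding spread_def by (intro sum_mono abs_sum_diff_le)
  also have "\<dots> = spread (V \<times> UNIV) f / 2"
    unfolding spread_def sum_product_bool
    by (simp add: sum.distrib sum_divide_distrib add_divide_distrib add_ac)
  finally show ?thesis .
qed

lemma spread_average_involution: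
  assumes fin: "finite X" and maps: "\<And>i. i \<in> X \<Longrightarrow> s i \<in> X"
    and invol: "\<And>i. i \<in> X \<Longrightarrow> s (s i) = i"
  shows "spread X (\<lambda>i. (f i + f (s i)) / 2) + (\<Sum>i\<in>X. \<bar>f i - f (s i)\<bar>) \<le> spread X f"
proof -
  define y where "y i = (f i + f (s i)) / 2" for i
  define b where "b i j = (\<bar>f i - f j\<bar> + \<bar>f i - f (s j)\<bar> + \<bar>f (s i) - f j\<bar>
      + \<bar>f (s i) - f (s j)\<bar>) / 4" for i j
  have "bij_betw s X X"
    by (rule bij_betw_byWitness[where f' = s]) (use maps invol in auto)
  then have reindex: "(\<Sum>i\<in>X. g (s i)) = (\<Sum>i\<in>X. g i)" for g :: "_ \<Rightarrow> real"
    by (rule sum.reindex_bij_betw)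
  have sum_b: "(\<Sum>i\<in>X. \<Sum>j\<in>X. b i j) = spread X f"
  proof -
    have "(\<Sum>i\<in>X. \<Sum>j\<in>X. \<bar>f i - f (s j)\<bar>) = spread X f"
      unfolding spread_def by (intro sum.cong refl reindex)
    moreover have "(\<Sum>i\<in>X. \<Sum>j\<in>X. \<bar>f (s i) - f j\<bar>) = spread X f"
      unfolding spread_def by (rule reindex)
    moreover have "(\<Sum>i\<in>X. \<Sum>j\<in>X. \<bar>f (s i) - f (s j)\<bar>) = spread X f"
      unfolding spread_def by (subst reindex[symmetric]) (intro sum.cong refl reindex)
    ultimately show ?thesis
      unfolding b_def spread_def by (simp add: sum.distrib sum_divide_distrib[symmetric])
  qed
  \<comment> \<open>Each \<open>\<bar>y i - y j\<bar>\<close> is at most the mean \<open>b i j\<close> of the four cross differences;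
    for \<open>j \<in> {i, s i}\<close> it vanishes while \<open>b i j = \<bar>f i - f (s i)\<bar> / 2\<close>.\<close>
  have row: "(\<Sum>j\<in>X. \<bar>y i - y j\<bar>) + \<bar>f i - f (s i)\<bar> \<le> (\<Sum>j\<in>X. b i j)" if "i \<in> X" for i
  proof -
    let ?slack = "\<lambda>j. b i j - \<bar>y i - y j\<bar>"
    have slack_nonneg: "0 \<le> ?slack j" for j
      using abs_sum_diff_le[of "f i" "f (s i)" "f j" "f (s j)"]
      by (simp add: y_def b_def diff_divide_distrib[symmetric])
    have "\<bar>f i - f (s i)\<bar> \<le> (\<Sum>j\<in>{i, s i}. ?slack j)"
    proof (cases "s i = i")
      case True
      then show ?thesis using slack_nonneg[of i] by simp
    next
      case False
      then show ?thesis using invol[OF that] by (simp add: y_def b_def abs_minus_commute)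
    qed
    also have "\<dots> \<le> (\<Sum>j\<in>X. ?slack j)"
      using fin that maps slack_nonneg by (intro sum_mono2) auto
    finally show ?thesis by (simp add: sum_subtractf)
  qed
  have "(\<Sum>i\<in>X. (\<Sum>j\<in>X. \<bar>y i - y j\<bar>) + \<bar>f i - f (s i)\<bar>) \<le> (\<Sum>i\<in>X. \<Sum>j\<in>X. b i j)"
    using row by (rule sum_mono)
  then show ?thesis
    unfolding sum_b by (simp add: spread_def y_def sum.distrib)
qed

lemma sum_involution_one_side:
  fixes g :: "'b \<Rightarrow> real"
  assumes fin: "finite X" and maps: "\<And>i. i \<in> X \<Longrightarrow> s i \<in> X"
    and invol: "\<And>i. i \<in> X \<Longrightarrow> s (s i) = i"
    and sym: "\<And>i. i \<in> X \<Longrightarrow> g (s i) = g i"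
    and fixed: "\<And>i. i \<in> X \<Longrightarrow> s i = i \<Longrightarrow> g i = 0"
    and sides: "\<And>i. i \<in> X \<Longrightarrow> s i \<noteq> i \<Longrightarrow> Q (s i) \<longleftrightarrow> \<not> Q i"
  shows "(\<Sum>i\<in>X. g i) = 2 * (\<Sum>i\<in>X. if Q i then g i else 0)"
proof -
  define e where "e i = (if Q i then g i else 0)" for i
  have "bij_betw s X X"
    by (rule bij_betw_byWitness[where f' = s]) (use maps invol in auto)
  then have reindex: "(\<Sum>i\<in>X. e (s i)) = (\<Sum>i\<in>X. e i)"
    by (rule sum.reindex_bij_betw)
  have "g i = e i + e (s i)" if "i \<in> X" for i
    using that sym[OF that] fixed[OF that] sides[OF that] by (cases "s i = i") (auto simp: e_def)
  then have "(\<Sum>i\<in>X. g i) = (\<Sum>i\<in>X. e i) + (\<Sum>i\<in>X. e (s i))"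
    by (simp add: sum.distrib)
  then show ?thesis
    unfolding reindex by (simp add: e_def)
qed

lemma Dval_eq_sum_accepted:
  assumes "finite V" and "\<And>v u. v \<in> V \<Longrightarrow> a v = Some u \<Longrightarrow> u \<in> V"
  shows "Dval V w a = (\<Sum>v\<in>V. case a v of None \<Rightarrow> 0 | Some u \<Rightarrow> \<bar>w u - w v\<bar>) / 2"
proof -
  have "connects V a = (\<lambda>v. (the (a v), v)) ` {v \<in> V. a v \<noteq> None}"
    using assms(2) by (force simp: connects_def)
  moreover have "inj_on (\<lambda>v. (the (a v), v)) {v \<in> V. a v \<noteq> None}"
    by (rule inj_onI) simp
  ultimately have "(\<Sum>(u, v) \<in> connects V a. \<bar>w u - w v\<bar>)
      = (\<Sum>v \<in> {v \<in> V. a v \<noteq> None}. \<bar>w (the (a v)) - w v\<bar>)"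
    by (simp add: sum.reindex)
  also have "\<dots> = (\<Sum>v\<in>V. case a v of None \<Rightarrow> 0 | Some u \<Rightarrow> \<bar>w u - w v\<bar>)"
    unfolding sum.inter_filter[OF assms(1)] by (intro sum.cong) (auto split: option.split)
  finally show ?thesis unfolding Dval_def by simp
qed

text \<open>
  This is all the inequality needs from the hypotheses: proposals stay in \<open>V\<close>, and only
  actual proposals are accepted.
\<close>

definition consistent_round :: "'a set \<Rightarrow> ('a \<Rightarrow> 'a option) \<Rightarrow> ('a \<Rightarrow> 'a option) \<Rightarrow> bool" where
  "consistent_round V p a \<longleftrightarrow>
     (\<forall>v\<in>V. \<forall>u. p v = Some u \<longrightarrow> u \<in> V) \<and>
     (\<forall>v\<in>V. \<forall>u. a v = Some u \<longrightarrow> u \<in> V \<and> p u = Some v)"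

lemma consistent_round_if_valid:
  assumes "connected_graph V N" and "valid_proposals V N w p" and "valid_acceptances V w p a"
  shows "consistent_round V p a"
proof -
  have "N v \<subseteq> V" if "v \<in> V" for v
    using assms(1) that by (simp add: connected_graph_def)
  then show ?thesis
    using assms(2,3) unfolding consistent_round_def valid_proposals_def valid_acceptances_def
    by blast
qed

lemma consistent_round_proposal:
  "consistent_round V p a \<Longrightarrow> v \<in> V \<Longrightarrow> p v = Some u \<Longrightarrow> u \<in> V"
  unfolding consistent_round_def by blast

lemma consistent_round_acceptance:
  "consistent_round V p a \<Longrightarrow> v \<in> V \<Longrightarrow> a v = Some u \<Longrightarrow> u \<in> V \<and> p u = Some v"
  unfolding consistent_round_def by blast

text \<open>
  The virtual node \<open>(v, True)\<close> is the sender \<open>v\<^sub>s\<close> and \<open>(v, False)\<close> the receiver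
  \<open>v\<^sub>a\<close>; a virtual node that takes part in no accepted proposal is its own partner.
\<close>

definition virtual_partner ::
  "('a \<Rightarrow> 'a option) \<Rightarrow> ('a \<Rightarrow> 'a option) \<Rightarrow> 'a \<times> bool \<Rightarrow> 'a \<times> bool" where
  "virtual_partner p a = (\<lambda>(v, sender).
     if sender then
       (case p v of Some u \<Rightarrow> if a u = Some v then (u, False) else (v, True) | None \<Rightarrow> (v, True))
     else (case a v of Some u \<Rightarrow> (u, True) | None \<Rightarrow> (v, False)))"

definition split_load :: "('a \<Rightarrow> real) \<Rightarrow> 'a \<times> bool \<Rightarrow> real" where
  "split_load w i = w (fst i) / 2"

definition virtual_load ::
  "('a \<Rightarrow> 'a option) \<Rightarrow> ('a \<Rightarrow> 'a option) \<Rightarrow> ('a \<Rightarrow> real) \<Rightarrow> 'a \<times> bool \<Rightarrow> real" where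
  "virtual_load p a w i = (split_load w i + split_load w (virtual_partner p a i)) / 2"

lemma spread_split_load:
  "spread (V \<times> UNIV) (split_load w) = 2 * spread V w"
proof -
  have halve: "\<bar>w u / 2 - w v / 2\<bar> = \<bar>w u - w v\<bar> / 2" for u v
    by (simp add: diff_divide_distrib[symmetric])
  show ?thesis
    unfolding spread_def split_load_def sum_product_bool halve by (simp add: sum.distrib sum_distrib_left)
qed

lemma virtual_partner_sender:
  "virtual_partner p a (v, True) =
     (case p v of Some u \<Rightarrow> if a u = Some v then (u, False) else (v, True) | None \<Rightarrow> (v, True))"
  by (simp add: virtual_partner_def)

lemma virtual_partner_receiver:
  "virtual_partner p a (v, False) = (case a v of Some u \<Rightarrow> (u, True) | None \<Rightarrow> (v, False))"
  by (simp add: virtual_partner_def)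

lemma fst_virtual_partner:
  "fst (virtual_partner p a (v, b)) \<in> insert v (set_option (p v) \<union> set_option (a v))"
  by (cases b) (auto simp: virtual_partner_sender virtual_partner_receiver split: option.split)

lemma virtual_partner_in:
  assumes "consistent_round V p a" and "i \<in> V \<times> UNIV"
  shows "virtual_partner p a i \<in> V \<times> UNIV"
proof -
  obtain v b where i: "i = (v, b)" and v: "v \<in> V" using assms(2) by auto
  have "set_option (p v) \<subseteq> V" "set_option (a v) \<subseteq> V"
    using consistent_round_proposal[OF assms(1) v] consistent_round_acceptance[OF assms(1) v]
    by auto
  then show ?thesis
    using fst_virtual_partner[of p a v b] v unfolding i by (auto simp: mem_Times_iff)
qed

lemma virtual_partner_involution:
  assumes "consistent_round V p a" and "i \<in> V \<times> UNIV"
  shows "virtual_partner p a (virtual_partner p a i) = i"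
proof -
  obtain v b where i: "i = (v, b)" and "v \<in> V" using assms(2) by auto
  show ?thesis
  proof (cases b)
    case True
    then show ?thesis
      unfolding i by (auto simp: virtual_partner_sender virtual_partner_receiver split: option.split)
  next
    case False
    show ?thesis
    proof (cases "a v")
      case (Some u)
      then have "p u = Some v"
        using consistent_round_acceptance[OF assms(1) \<open>v \<in> V\<close>] by blast
      then show ?thesis
        unfolding i using False Some by (simp add: virtual_partner_sender virtual_partner_receiver)
    qed (simp add: i False virtual_partner_receiver)
  qed
qed

lemma virtual_partner_switches_side:
  "virtual_partner p a i \<noteq> i \<Longrightarrow> snd (virtual_partner p a i) \<longleftrightarrow> \<not> snd i"
proof (cases i)
  case (Pair v b)
  assume "virtual_partner p a i \<noteq> i"
  then show ?thesis
    unfolding Pair by (cases b) (auto simp: virtual_partner_sender virtual_partner_receiver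
        split: option.split_asm if_split_asm)
qed

lemma round_step_eq_virtual_load:
  "round_step p a w v = virtual_load p a w (v, True) + virtual_load p a w (v, False)"
proof -
  have sender: "virtual_load p a w (v, True) = (case p v of
      Some u \<Rightarrow> if a u = Some v then (w v / 2 + w u / 2) / 2 else w v / 2 | None \<Rightarrow> w v / 2)"
    by (simp add: virtual_load_def split_load_def virtual_partner_sender split: option.split)
  have receiver: "virtual_load p a w (v, False)
      = (case a v of Some u \<Rightarrow> (w u / 2 + w v / 2) / 2 | None \<Rightarrow> w v / 2)"
    by (simp add: virtual_load_def split_load_def virtual_partner_receiver add.commute
        split: option.split)
  show ?thesis
    unfolding sender receiver round_step_def Let_def by simp
qed

lemma sum_virtual_gaps:
  assumes fin: "finite V" and cons: "consistent_round V p a"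
  shows "(\<Sum>i\<in>V \<times> UNIV. \<bar>split_load w i - split_load w (virtual_partner p a i)\<bar>)
           = 2 * Dval V w a"
proof -
  let ?gap = "\<lambda>i. \<bar>split_load w i - split_load w (virtual_partner p a i)\<bar>"
  have "(\<Sum>i\<in>V \<times> UNIV. ?gap i)
      = 2 * (\<Sum>i\<in>V \<times> UNIV. if \<not> snd i then ?gap i else 0)"
  proof (rule sum_involution_one_side)
    fix i :: "'a \<times> bool" assume "i \<in> V \<times> UNIV"
    then show "virtual_partner p a i \<in> V \<times> UNIV" "virtual_partner p a (virtual_partner p a i) = i"
      "?gap (virtual_partner p a i) = ?gap i"
      using virtual_partner_in[OF cons] virtual_partner_involution[OF cons]
      by (simp_all add: abs_minus_commute)
  qed (simp_all add: fin virtual_partner_switches_side)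
  also have "(\<Sum>i\<in>V \<times> UNIV. if \<not> snd i then ?gap i else 0)
      = (\<Sum>v\<in>V. (case a v of None \<Rightarrow> 0 | Some u \<Rightarrow> \<bar>w u - w v\<bar>) / 2)"
    unfolding sum_product_bool
    by (intro sum.cong) (auto simp: split_load_def virtual_partner_receiver
        diff_divide_distrib[symmetric] abs_minus_commute split: option.split)
  also have "\<dots> = Dval V w a"
    using fin consistent_round_acceptance[OF cons]
    by (simp add: Dval_eq_sum_accepted sum_divide_distrib)
  finally show ?thesis .
qed

lemma phi_round_step_le:
  assumes fin: "finite V" and cons: "consistent_round V p a"
  shows "phi V (round_step p a w) \<le> phi V w - Dval V w a / 2"
proof -
  have "spread V (round_step p a w) \<le> spread (V \<times> UNIV) (virtual_load p a w) / 2"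
    unfolding round_step_eq_virtual_load by (rule spread_merge_halves)
  also have "spread (V \<times> UNIV) (virtual_load p a w)
      \<le> spread (V \<times> UNIV) (split_load w)
        - (\<Sum>i\<in>V \<times> UNIV. \<bar>split_load w i - split_load w (virtual_partner p a i)\<bar>)"
    using spread_average_involution[of "V \<times> UNIV" "virtual_partner p a" "split_load w"]
      fin virtual_partner_in[OF cons] virtual_partner_involution[OF cons]
    unfolding virtual_load_def by simp
  also have "spread (V \<times> UNIV) (split_load w) = 2 * spread V w"
    by (rule spread_split_load)
  finally show ?thesis
    unfolding phi_eq_spread[OF fin] sum_virtual_gaps[OF fin cons] by simp
qed

theorem lemma2:
  fixes V :: "'a set" and N :: "nat \<Rightarrow> 'a \<Rightarrow> 'a set" and w0 :: "'a \<Rightarrow> real"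
    and p a :: "nat \<Rightarrow> 'a \<Rightarrow> 'a option" and r :: nat
  assumes finV: "finite V"
    and graphs: "\<And>s. s \<ge> 1 \<Longrightarrow> connected_graph V (N s)"
    and nonneg: "\<And>v. v \<in> V \<Longrightarrow> w0 v \<ge> 0"
    and props: "\<And>s. s \<ge> 1 \<Longrightarrow> valid_proposals V (N s) (load p a w0 (s - 1)) (p s)"
    and accs: "\<And>s. s \<ge> 1 \<Longrightarrow> valid_acceptances V (load p a w0 (s - 1)) (p s) (a s)"
    and r: "r \<ge> 1"
  shows "phi V (load p a w0 r)
           \<le> phi V (load p a w0 (r - 1)) - Dval V (load p a w0 (r - 1)) (a r) / 2"
proof -
  obtain k where k: "r = Suc k" using r by (cases r) auto
  have "consistent_round V (p r) (a r)"
    using consistent_round_if_valid[OF graphs props accs] r by blast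
  then show ?thesis
    using phi_round_step_le[OF finV] by (simp add: k)
qed

end
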